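(* Let $A\in\mathsf{M}_n(\mathbb{C})$ be $h$-cyclic with consecutive partition $P=\{V_1,\dots,V_h\}$. Let $i\in\{1,\dots,h\}$, $x\in\mathbb{C}^{|V_i|}$, and let $v\in\mathbb{C}^n$, partitioned conformably with $P$ as $v=(v_1,\dots,v_h)$ with $v_k\in\mathbb{C}^{|V_k|}$, be defined by $v_i=x$ and $v_k=0$ for $k\neq i$. Then for every positive integer $p$, the $k$-th block of $A^pv$ equals $B_{ip}x$ if $k=\alpha^{-p}(i)$ and equals $0$ if $k\neq\alpha^{-p}(i)$.
   Context: $P=\{V_1,\dots,V_h\}$ is a consecutive partition of $\{1,\dots,n\}$ into nonempty sets: $V_1=\{1,\dots,i_1\}$, $V_2=\{i_1+1,\dots,i_2\}$, \dots, $V_h=\{i_{h-1}+1,\dots,n\}$. $A_{ij}$ denotes the submatrix $A(V_i,V_j)$. $A$ being $h$-cyclic with partition $P$ means $A_{ij}=0$ unless $j\equiv i+1\pmod h$, so the only possibly nonzero blocks are $A_{12},\dots,A_{h-1,h},A_{h1}$. Let $\alpha$ be the permutation of $\{1,\dots,h\}$ given by $\alpha(i)=(i\bmod h)+1$ (so $\alpha^{-1}(i)=i-1$ for $i>1$ and $\alpha^{-1}(1)=h$). For $i\in\{1,\dots,h\}$ and $p\in\mathbb{N}$, $B_{ip}:=\prod_{j=h+1-p}^{h}A_{\alpha^{j-1}(i),\alpha^{j}(i)}$, the product taken in increasing order of $j$. *)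

theory Defs
  imports "Jordan_Normal_Form.Matrix"
begin

text \<open>Consecutive partition of the (0-indexed) entry positions 0..n-1 into h nonempty
  blocks; block k (for k = 1..h) is the index range b (k-1) ..< b k.\<close>
definition consec_part :: "nat \<Rightarrow> nat \<Rightarrow> (nat \<Rightarrow> nat) \<Rightarrow> bool" where
  "consec_part n h b \<longleftrightarrow> h \<ge> 1 \<and> b 0 = 0 \<and> b h = n \<and> (\<forall>k<h. b k < b (Suc k))"

definition bsz :: "(nat \<Rightarrow> nat) \<Rightarrow> nat \<Rightarrow> nat" where
  "bsz b k = b k - b (k - 1)"

definition blk :: "'a mat \<Rightarrow> (nat \<Rightarrow> nat) \<Rightarrow> nat \<Rightarrow> nat \<Rightarrow> 'a mat" where
  "blk A b k l = mat (bsz b k) (bsz b l) (\<lambda>(r, c). A $$ (b (k - 1) + r, b (l - 1) + c))"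

definition vblk :: "'a vec \<Rightarrow> (nat \<Rightarrow> nat) \<Rightarrow> nat \<Rightarrow> 'a vec" where
  "vblk w b k = vec (bsz b k) (\<lambda>r. w $ (b (k - 1) + r))"

definition alpha :: "nat \<Rightarrow> nat \<Rightarrow> nat" where
  "alpha h i = (i mod h) + 1"

definition alpha_inv :: "nat \<Rightarrow> nat \<Rightarrow> nat" where
  "alpha_inv h i = (if i = 1 then h else i - 1)"

definition alpha_pow :: "nat \<Rightarrow> int \<Rightarrow> nat \<Rightarrow> nat" where
  "alpha_pow h j i = (if j \<ge> 0 then (alpha h ^^ nat j) i else (alpha_inv h ^^ nat (- j)) i)"

definition h_cyclic :: "nat \<Rightarrow> nat \<Rightarrow> (nat \<Rightarrow> nat) \<Rightarrow> 'a::zero mat \<Rightarrow> bool" where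
  "h_cyclic n h b A \<longleftrightarrow> A \<in> carrier_mat n n \<and> consec_part n h b \<and>
     (\<forall>k\<in>{1..h}. \<forall>l\<in>{1..h}. l \<noteq> alpha h k \<longrightarrow> blk A b k l = 0\<^sub>m (bsz b k) (bsz b l))"

definition Bmat :: "nat \<Rightarrow> (nat \<Rightarrow> nat) \<Rightarrow> 'a::semiring_1 mat \<Rightarrow> nat \<Rightarrow> nat \<Rightarrow> 'a mat" where
  "Bmat h b A i p = foldr (\<lambda>j M. blk A b (alpha_pow h (j - 1) i) (alpha_pow h j i) * M)
      [int h + 1 - int p .. int h] (1\<^sub>m (bsz b i))"

end

theory Submission
  imports Defs
begin

(* Block row k of an h-cyclic matrix vanishes outside block column alpha(k), so
   (A w)_k = A_{k,alpha(k)} w_{alpha(k)}.  Hence A maps a vector concentrated on block j with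
   block y to one concentrated on block alpha^-1(j) with block A_{alpha^-1(j),j} y.  Iterating
   p times from x on block i multiplies x by A_{alpha^-p(i),alpha^(1-p)(i)} ... A_{alpha^-1(i),i},
   which is B_ip because alpha^h is the identity. *)

lemma consec_part_mono:
  assumes cp: "consec_part n h b" and "k \<le> l" "l \<le> h"
  shows "b k \<le> b l"
  using assms(2,3)
proof (induction l)
  case (Suc l)
  have "b l < b (Suc l)" using cp Suc.prems unfolding consec_part_def by auto
  then show ?case using Suc by (cases "k = Suc l") auto
qed simp

lemma consec_part_le:
  assumes "consec_part n h b" "k \<le> h"
  shows "b k \<le> n"
  using consec_part_mono[OF assms(1) assms(2) order_refl] assms(1)
  unfolding consec_part_def by simp

lemma consec_part_block_exists:
  assumes cp: "consec_part n h b" and c: "c < n"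
  obtains l where "l \<in> {1..h}" "b (l - 1) \<le> c" "c < b l"
proof -
  define l where "l = (LEAST l. c < b l)"
  have ex: "c < b h" using cp c unfolding consec_part_def by auto
  have "c < b l" unfolding l_def by (rule LeastI[of _ h]) (rule ex)
  moreover have "l \<le> h" unfolding l_def by (rule Least_le) (rule ex)
  moreover have "l \<noteq> 0"
  proof
    assume "l = 0"
    with \<open>c < b l\<close> cp show False by (simp add: consec_part_def)
  qed
  moreover have "\<not> c < b (l - 1)"
    unfolding l_def by (rule not_less_Least) (use \<open>l \<noteq> 0\<close> l_def in auto)
  ultimately show ?thesis by (intro that[of l]) auto
qed

lemma consec_part_block_unique:
  assumes cp: "consec_part n h b" and "l \<in> {1..h}" "l' \<in> {1..h}"
    and "b (l - 1) \<le> c" "c < b l" "b (l' - 1) \<le> c" "c < b l'"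
  shows "l = l'"
proof (rule ccontr)
  assume "l \<noteq> l'"
  then consider "l < l'" | "l' < l" by linarith
  then show False
  proof cases
    case 1
    then have "b l \<le> b (l' - 1)" using consec_part_mono[OF cp] assms by simp
    then show False using assms by simp
  next
    case 2
    then have "b l' \<le> b (l - 1)" using consec_part_mono[OF cp] assms by simp
    then show False using assms by simp
  qed
qed

lemma alpha_in_blocks: "h \<ge> 1 \<Longrightarrow> alpha h k \<in> {1..h}"
  unfolding alpha_def by (auto simp: Suc_le_eq)

lemma alpha_inv_in_blocks: "j \<in> {1..h} \<Longrightarrow> alpha_inv h j \<in> {1..h}"
  unfolding alpha_inv_def by auto

lemma alpha_alpha_inv: "j \<in> {1..h} \<Longrightarrow> alpha h (alpha_inv h j) = j"
  unfolding alpha_def alpha_inv_def by auto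

lemma alpha_inv_alpha: "j \<in> {1..h} \<Longrightarrow> alpha_inv h (alpha h j) = j"
  unfolding alpha_def alpha_inv_def by (cases "j = h") auto

lemma funpow_alpha:
  assumes "i \<in> {1..h}"
  shows "(alpha h ^^ m) i = (i - 1 + m) mod h + 1"
proof (induction m)
  case 0
  have "i - 1 < h" using assms by auto
  then show ?case using assms by simp
qed (simp add: alpha_def mod_Suc_eq)

lemma funpow_alpha_self:
  assumes "i \<in> {1..h}"
  shows "(alpha h ^^ h) i = i"
proof -
  have "(alpha h ^^ h) i = (i - 1 + h) mod h + 1" by (rule funpow_alpha[OF assms])
  also have "\<dots> = (i - 1) mod h + 1" by (simp only: mod_add_self2)
  also have "\<dots> = i" using assms by auto
  finally show ?thesis .
qed

lemma funpow_alpha_in_blocks: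
  assumes "i \<in> {1..h}"
  shows "(alpha h ^^ m) i \<in> {1..h}"
proof -
  have "h > 0" using assms by simp
  then show ?thesis using assms by (simp add: funpow_alpha Suc_le_eq)
qed

lemma funpow_alpha_inv_in_blocks: "i \<in> {1..h} \<Longrightarrow> (alpha_inv h ^^ m) i \<in> {1..h}"
proof (induction m)
  case (Suc m)
  then show ?case using alpha_inv_in_blocks[of "(alpha_inv h ^^ m) i" h] by simp
qed simp

lemma alpha_pow_in_blocks: "i \<in> {1..h} \<Longrightarrow> alpha_pow h j i \<in> {1..h}"
  unfolding alpha_pow_def using funpow_alpha_in_blocks funpow_alpha_inv_in_blocks by auto

lemma alpha_pow_diff_one:
  assumes i: "i \<in> {1..h}"
  shows "alpha_pow h (j - 1) i = alpha_inv h (alpha_pow h j i)"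
proof (cases "j \<ge> 1")
  case True
  then have "nat j = Suc (nat (j - 1))" by simp
  then show ?thesis
    using True alpha_inv_alpha[OF funpow_alpha_in_blocks[OF i]] unfolding alpha_pow_def by simp
next
  case False
  then have "nat (- (j - 1)) = Suc (nat (- j))" by simp
  then show ?thesis using False unfolding alpha_pow_def by simp
qed

lemma alpha_pow_minus_Suc:
  assumes i: "i \<in> {1..h}"
  shows "alpha_pow h (- int (Suc p)) i = alpha_inv h (alpha_pow h (- int p) i)"
proof -
  have "- int (Suc p) = - int p - 1" by simp
  then show ?thesis by (simp only: alpha_pow_diff_one[OF i])
qed

lemma alpha_pow_periodic:
  assumes i: "i \<in> {1..h}"
  shows "alpha_pow h (int h - int m) i = alpha_pow h (- int m) i"
proof (induction m)
  case 0
  show ?case using funpow_alpha_self[OF i] unfolding alpha_pow_def by simp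
next
  case (Suc m)
  have "alpha_pow h (int h - int (Suc m)) i = alpha_pow h ((int h - int m) - 1) i"
    by (simp add: algebra_simps)
  also have "\<dots> = alpha_inv h (alpha_pow h (- int m) i)"
    using Suc alpha_pow_diff_one[OF i] by simp
  also have "\<dots> = alpha_pow h (- int (Suc m)) i"
    using alpha_pow_minus_Suc[OF i] by simp
  finally show ?case .
qed

lemma pow_mat_Suc_left:
  assumes A: "(A :: 'a :: semiring_1 mat) \<in> carrier_mat n n"
  shows "A ^\<^sub>m Suc p = A * A ^\<^sub>m p"
proof (induction p)
  case (Suc p)
  have "A ^\<^sub>m Suc (Suc p) = (A * A ^\<^sub>m p) * A" using Suc by simp
  also have "\<dots> = A * (A ^\<^sub>m p * A)" by (rule assoc_mult_mat[OF A pow_carrier_mat[OF A] A])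
  finally show ?case by simp
qed (use A in simp)

lemma mult_mat_vec_zero_vec:
  "(M :: 'a :: semiring_0 mat) \<in> carrier_mat r c \<Longrightarrow> M *\<^sub>v 0\<^sub>v c = 0\<^sub>v r"
  by (intro eq_vecI) (auto simp: row_def)

lemma blk_carrier_mat: "blk A b k l \<in> carrier_mat (bsz b k) (bsz b l)"
  unfolding blk_def by simp

lemma entry_zero_if_blk_zero:
  assumes "blk A b k l = 0\<^sub>m (bsz b k) (bsz b l)"
    and "r < bsz b k" "b (l - 1) \<le> c" "c < b l"
  shows "A $$ (b (k - 1) + r, c) = 0"
proof -
  have c: "c - b (l - 1) < bsz b l" using assms(3,4) unfolding bsz_def by simp
  then have "blk A b k l $$ (r, c - b (l - 1)) = A $$ (b (k - 1) + r, c)"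
    using assms(2,3) unfolding blk_def by simp
  moreover have "blk A b k l $$ (r, c - b (l - 1)) = 0" using assms(1,2) c by simp
  ultimately show ?thesis by simp
qed

lemma vblk_mult_mat_vec_single_blk:
  fixes A :: "'a :: semiring_0 mat"
  assumes cp: "consec_part n h b" and A: "A \<in> carrier_mat n n" and w: "w \<in> carrier_vec n"
    and k: "k \<in> {1..h}" and l: "l \<in> {1..h}"
    and zero: "\<And>l'. l' \<in> {1..h} \<Longrightarrow> l' \<noteq> l \<Longrightarrow> blk A b k l' = 0\<^sub>m (bsz b k) (bsz b l')"
  shows "vblk (A *\<^sub>v w) b k = blk A b k l *\<^sub>v vblk w b l"
proof (rule eq_vecI)
  fix r assume "r < dim_vec (blk A b k l *\<^sub>v vblk w b l)"
  then have r: "r < bsz b k" unfolding blk_def by simp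
  define f where "f c = A $$ (b (k - 1) + r, c) * w $ c" for c
  have "b (k - 1) + r < n"
    using r consec_part_le[OF cp, of k] k unfolding bsz_def by auto
  then have "vblk (A *\<^sub>v w) b k $ r = sum f {0..<n}"
    using r A w by (simp add: vblk_def f_def scalar_prod_def row_def)
  also have "\<dots> = sum f {b (l - 1)..<b l}"
  proof (rule sum.mono_neutral_right)
    show "{b (l - 1)..<b l} \<subseteq> {0..<n}" using consec_part_le[OF cp, of l] l by auto
    show "\<forall>c\<in>{0..<n} - {b (l - 1)..<b l}. f c = 0"
    proof
      fix c assume c: "c \<in> {0..<n} - {b (l - 1)..<b l}"
      then obtain l' where l': "l' \<in> {1..h}" "b (l' - 1) \<le> c" "c < b l'"
        using consec_part_block_exists[OF cp] by auto
      with c have "l' \<noteq> l" by auto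
      then show "f c = 0"
        using entry_zero_if_blk_zero[OF zero[OF l'(1)] r l'(2,3)] by (simp add: f_def)
    qed
  qed simp
  also have "\<dots> = (\<Sum>c = 0..<bsz b l. f (b (l - 1) + c))"
    by (subst sum.atLeastLessThan_shift_0) (simp add: bsz_def comp_def)
  also have "\<dots> = (blk A b k l *\<^sub>v vblk w b l) $ r"
    using r by (simp add: f_def blk_def vblk_def scalar_prod_def row_def)
  finally show "vblk (A *\<^sub>v w) b k $ r = (blk A b k l *\<^sub>v vblk w b l) $ r" .
qed (simp add: vblk_def blk_def)

lemma h_cyclic_vblk_mult_mat_vec:
  fixes A :: "'a :: semiring_0 mat"
  assumes cyc: "h_cyclic n h b A" and w: "w \<in> carrier_vec n" and k: "k \<in> {1..h}"
  shows "vblk (A *\<^sub>v w) b k = blk A b k (alpha h k) *\<^sub>v vblk w b (alpha h k)"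
proof -
  have cp: "consec_part n h b" and A: "A \<in> carrier_mat n n"
    using cyc unfolding h_cyclic_def by auto
  then have "alpha h k \<in> {1..h}" using alpha_in_blocks unfolding consec_part_def by blast
  with cyc k show ?thesis
    by (intro vblk_mult_mat_vec_single_blk[OF cp A w k]) (auto simp: h_cyclic_def)
qed

definition concentrated_on_blk :: "nat \<Rightarrow> (nat \<Rightarrow> nat) \<Rightarrow> nat \<Rightarrow> 'a :: zero vec \<Rightarrow> 'a vec \<Rightarrow> bool"
  where "concentrated_on_blk h b j y w \<longleftrightarrow>
    (\<forall>k \<in> {1..h}. vblk w b k = (if k = j then y else 0\<^sub>v (bsz b k)))"

lemma concentrated_on_blk_embedding:
  assumes cp: "consec_part n h b" and i: "i \<in> {1..h}" and x: "x \<in> carrier_vec (bsz b i)"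
  shows "concentrated_on_blk h b i x
    (vec n (\<lambda>r. if b (i - 1) \<le> r \<and> r < b i then x $ (r - b (i - 1)) else 0))"
    (is "concentrated_on_blk h b i x ?v")
  unfolding concentrated_on_blk_def
proof
  fix k assume k: "k \<in> {1..h}"
  show "vblk ?v b k = (if k = i then x else 0\<^sub>v (bsz b k))"
  proof (rule eq_vecI)
    fix r assume "r < dim_vec (if k = i then x else 0\<^sub>v (bsz b k))"
    then have r: "r < bsz b k" using x by (cases "k = i") auto
    then have rk: "b (k - 1) + r < b k" unfolding bsz_def by simp
    moreover have "b k \<le> n" using consec_part_le[OF cp, of k] k by simp
    moreover have "k \<noteq> i \<Longrightarrow> \<not> (b (i - 1) \<le> b (k - 1) + r \<and> b (k - 1) + r < b i)"
      using consec_part_block_unique[OF cp k i, of "b (k - 1) + r"] rk by auto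
    ultimately show "vblk ?v b k $ r = (if k = i then x else 0\<^sub>v (bsz b k)) $ r"
      using r by (auto simp: vblk_def)
  qed (use x in \<open>auto simp: vblk_def\<close>)
qed

lemma h_cyclic_mult_concentrated_on_blk:
  fixes A :: "'a :: semiring_0 mat"
  assumes cyc: "h_cyclic n h b A" and w: "w \<in> carrier_vec n" and j: "j \<in> {1..h}"
    and conc: "concentrated_on_blk h b j y w"
  shows "concentrated_on_blk h b (alpha_inv h j) (blk A b (alpha_inv h j) j *\<^sub>v y) (A *\<^sub>v w)"
  unfolding concentrated_on_blk_def
proof
  fix k assume k: "k \<in> {1..h}"
  have "h \<ge> 1" using cyc unfolding h_cyclic_def consec_part_def by simp
  then have wk: "vblk w b (alpha h k) = (if alpha h k = j then y else 0\<^sub>v (bsz b (alpha h k)))"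
    using conc alpha_in_blocks unfolding concentrated_on_blk_def by blast
  have "k = alpha_inv h j \<longleftrightarrow> alpha h k = j"
    using alpha_alpha_inv[OF j] alpha_inv_alpha[OF k] by auto
  then show "vblk (A *\<^sub>v w) b k =
      (if k = alpha_inv h j then blk A b (alpha_inv h j) j *\<^sub>v y else 0\<^sub>v (bsz b k))"
    using h_cyclic_vblk_mult_mat_vec[OF cyc w k] wk mult_mat_vec_zero_vec[OF blk_carrier_mat]
    by auto
qed

lemma Bmat_Suc:
  assumes i: "i \<in> {1..h}"
  shows "Bmat h b A i (Suc p) =
    blk A b (alpha_pow h (- int (Suc p)) i) (alpha_pow h (- int p) i) * Bmat h b A i p"
proof -
  have "[int h + 1 - int (Suc p) .. int h] = (int h - int p) # [int h + 1 - int p .. int h]"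
    by (subst upto_rec1) (auto simp: algebra_simps)
  then have "Bmat h b A i (Suc p) =
      blk A b (alpha_pow h (int h - int p - 1) i) (alpha_pow h (int h - int p) i) * Bmat h b A i p"
    unfolding Bmat_def by simp
  moreover have "int h - int p - 1 = int h - int (Suc p)" by simp
  ultimately show ?thesis by (simp only: alpha_pow_periodic[OF i])
qed

lemma Bmat_carrier_mat:
  assumes i: "i \<in> {1..h}"
  shows "Bmat h b A i p \<in> carrier_mat (bsz b (alpha_pow h (- int p) i)) (bsz b i)"
proof (induction p)
  case 0
  show ?case unfolding Bmat_def alpha_pow_def by simp
next
  case (Suc p)
  show ?case unfolding Bmat_Suc[OF i] by (rule mult_carrier_mat[OF blk_carrier_mat Suc])
qed

lemma h_cyclic_pow_mult_concentrated_on_blk: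
  fixes A :: "'a :: semiring_1 mat"
  assumes cyc: "h_cyclic n h b A" and i: "i \<in> {1..h}" and x: "x \<in> carrier_vec (bsz b i)"
    and v: "v \<in> carrier_vec n" and conc: "concentrated_on_blk h b i x v"
  shows "concentrated_on_blk h b (alpha_pow h (- int p) i) (Bmat h b A i p *\<^sub>v x) (A ^\<^sub>m p *\<^sub>v v)"
proof (induction p)
  case 0
  have "A \<in> carrier_mat n n" using cyc unfolding h_cyclic_def by simp
  then show ?case using conc v x unfolding Bmat_def alpha_pow_def by simp
next
  case (Suc p)
  have A: "A \<in> carrier_mat n n" using cyc unfolding h_cyclic_def by simp
  let ?j = "alpha_pow h (- int p) i"
  have Av: "A ^\<^sub>m Suc p *\<^sub>v v = A *\<^sub>v (A ^\<^sub>m p *\<^sub>v v)"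
    unfolding pow_mat_Suc_left[OF A] by (rule assoc_mult_mat_vec[OF A pow_carrier_mat[OF A] v])
  have "Bmat h b A i (Suc p) *\<^sub>v x = (blk A b (alpha_inv h ?j) ?j * Bmat h b A i p) *\<^sub>v x"
    by (simp only: Bmat_Suc[OF i] alpha_pow_minus_Suc[OF i])
  also have "\<dots> = blk A b (alpha_inv h ?j) ?j *\<^sub>v (Bmat h b A i p *\<^sub>v x)"
    by (rule assoc_mult_mat_vec[OF blk_carrier_mat Bmat_carrier_mat[OF i] x])
  finally have Bx: "Bmat h b A i (Suc p) *\<^sub>v x = blk A b (alpha_inv h ?j) ?j *\<^sub>v (Bmat h b A i p *\<^sub>v x)" .
  have "A ^\<^sub>m p *\<^sub>v v \<in> carrier_vec n"
    by (rule mult_mat_vec_carrier[OF pow_carrier_mat[OF A] v])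
  from h_cyclic_mult_concentrated_on_blk[OF cyc this alpha_pow_in_blocks[OF i] Suc]
  show ?case unfolding Av Bx alpha_pow_minus_Suc[OF i] .
qed

theorem lemma5p2:
  fixes A :: "complex mat" and n h :: nat and b :: "nat \<Rightarrow> nat" and i :: nat
    and x :: "complex vec" and v :: "complex vec"
  assumes cyc: "h_cyclic n h b A"
    and i: "i \<in> {1..h}"
    and x: "x \<in> carrier_vec (bsz b i)"
    and v: "v = vec n (\<lambda>r. if b (i - 1) \<le> r \<and> r < b i then x $ (r - b (i - 1)) else 0)"
  shows "\<forall>p \<ge> 1. \<forall>k \<in> {1..h}.
           vblk (A ^\<^sub>m p *\<^sub>v v) b k =
             (if k = alpha_pow h (- int p) i then Bmat h b A i p *\<^sub>v x else 0\<^sub>v (bsz b k))"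
proof (intro allI impI)
  fix p :: nat
  have "consec_part n h b" using cyc unfolding h_cyclic_def by simp
  then have "concentrated_on_blk h b i x v"
    unfolding v by (rule concentrated_on_blk_embedding[OF _ i x])
  moreover have "v \<in> carrier_vec n" unfolding v by simp
  ultimately show "\<forall>k \<in> {1..h}. vblk (A ^\<^sub>m p *\<^sub>v v) b k =
      (if k = alpha_pow h (- int p) i then Bmat h b A i p *\<^sub>v x else 0\<^sub>v (bsz b k))"
    using h_cyclic_pow_mult_concentrated_on_blk[OF cyc i x]
    unfolding concentrated_on_blk_def by blast
qed

end
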